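(* Let $F$ be the $2$-dimensional cellular automaton with state set $Q_F=\{0,\leftarrow,\downarrow,\leftarrow\!\!\!\!\downarrow\}$, neighborhood $\{(0,0),(0,1),(1,0)\}$, and local rule $f(\text{center},\text{north},\text{east})$ given by $f(0,\downarrow,0)=\downarrow$, $f(0,0,\leftarrow)=\leftarrow$, $f(0,\ast,\leftarrow\!\!\!\!\downarrow)=\leftarrow$, $f(\downarrow,\ast,\leftarrow)=\leftarrow\!\!\!\!\downarrow$, and $f(a,\ast,\ast)=a$ in all other cases (where $\ast$ denotes any state, north is the cell at offset $(0,1)$ and east the cell at offset $(1,0)$). Then no $2$-dimensional freezing cellular automaton with neighborhood $\mathrm{VN}_2$ which is $1$-change can simulate $F$. Consequently, there is no $1$-change freezing cellular automaton with neighborhood $\mathrm{VN}_2$ which simulates every $2$-dimensional freezing cellular automaton with neighborhood $\mathrm{VN}_2$.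
   Context: A $d$-dimensional cellular automaton (CA) is $F=(d,Q,N,f)$ with $Q$ finite, $N\subset\mathbb{Z}^d$ finite, $f:Q^N\to Q$, global map $F(c)_z=f(c|_{z+N})$. A CA is freezing if there is a partial order $\preceq$ on $Q$ with $F(c)_z\preceq c_z$ for all $c,z$. A CA is $k$-change if in every orbit every cell changes state at most $k$ times. $\mathrm{VN}_2=\{(0,0),(\pm1,0),(0,\pm1)\}$. Simulation: $U$ simulates $G$ (same dimension $d$) if there exist $T>0$, a rectangular block $B\subseteq\mathbb{Z}^d$ with size-vector $b$, a finite $C\subset\mathbb{Z}^d$ with $\vec0\in C$, and $\phi:Q_G^C\to Q_U^B$ such that $\bar\phi(c)_{bz+r}=\phi(c|_{z+C})_r$ ($bz$ componentwise) defines an injective map $\bar\phi$ with $\bar\phi(G(c))=U^T(\bar\phi(c))$ for all $c$. *)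

theory Defs
  imports Main
begin

text \<open>The local rule is
applied to the pattern c restricted to z + N (values outside N are left undefined).\<close>

type_synonym cell = "int \<times> int"

definition addp :: "cell \<Rightarrow> cell \<Rightarrow> cell" where
  "addp z n = (fst z + fst n, snd z + snd n)"

definition conf :: "'q set \<Rightarrow> (cell \<Rightarrow> 'q) set" where
  "conf Q = {c. \<forall>z. c z \<in> Q}"

definition pat :: "cell set \<Rightarrow> (cell \<Rightarrow> 'q) \<Rightarrow> cell \<Rightarrow> (cell \<Rightarrow> 'q)" where
  "pat N c z = (\<lambda>n. if n \<in> N then c (addp z n) else undefined)"

definition glob :: "cell set \<Rightarrow> ((cell \<Rightarrow> 'q) \<Rightarrow> 'q) \<Rightarrow> (cell \<Rightarrow> 'q) \<Rightarrow> (cell \<Rightarrow> 'q)" where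
  "glob N f c = (\<lambda>z. f (pat N c z))"

definition is_CA :: "'q set \<Rightarrow> cell set \<Rightarrow> ((cell \<Rightarrow> 'q) \<Rightarrow> 'q) \<Rightarrow> bool" where
  "is_CA Q N f \<longleftrightarrow> finite Q \<and> Q \<noteq> {} \<and> finite N \<and>
     (\<forall>p. (\<forall>n\<in>N. p n \<in> Q) \<longrightarrow> f p \<in> Q)"

definition freezing :: "'q set \<Rightarrow> cell set \<Rightarrow> ((cell \<Rightarrow> 'q) \<Rightarrow> 'q) \<Rightarrow> bool" where
  "freezing Q N f \<longleftrightarrow> (\<exists>R. partial_order_on Q R \<and>
     (\<forall>c\<in>conf Q. \<forall>z. (glob N f c z, c z) \<in> R))"

definition k_change :: "nat \<Rightarrow> 'q set \<Rightarrow> cell set \<Rightarrow> ((cell \<Rightarrow> 'q) \<Rightarrow> 'q) \<Rightarrow> bool" where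
  "k_change k Q N f \<longleftrightarrow> (\<forall>c\<in>conf Q. \<forall>z.
     finite {t::nat. (glob N f ^^ Suc t) c z \<noteq> (glob N f ^^ t) c z} \<and>
     card {t::nat. (glob N f ^^ Suc t) c z \<noteq> (glob N f ^^ t) c z} \<le> k)"

text \<open>Block encoding: the block B = [a1, a1+b1) x [a2, a2+b2) with size vector b = (b1,b2).
Cell w is written uniquely as w = b z + r with r in B; its image is phi (c|_{z+C}) r.\<close>

definition block :: "int \<Rightarrow> int \<Rightarrow> int \<Rightarrow> int \<Rightarrow> cell set" where
  "block a1 a2 b1 b2 = {a1..<a1+b1} \<times> {a2..<a2+b2}"

definition phibar :: "int \<Rightarrow> int \<Rightarrow> int \<Rightarrow> int \<Rightarrow> cell set \<Rightarrow>
    ((cell \<Rightarrow> 'g) \<Rightarrow> cell \<Rightarrow> 'q) \<Rightarrow> (cell \<Rightarrow> 'g) \<Rightarrow> (cell \<Rightarrow> 'q)" where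
  "phibar a1 a2 b1 b2 C \<phi> c = (\<lambda>w.
     let z = ((fst w - a1) div b1, (snd w - a2) div b2)
     in \<phi> (pat C c z) (fst w - b1 * fst z, snd w - b2 * snd z))"

definition simulates ::
  "'q set \<Rightarrow> cell set \<Rightarrow> ((cell \<Rightarrow> 'q) \<Rightarrow> 'q) \<Rightarrow>
   'g set \<Rightarrow> cell set \<Rightarrow> ((cell \<Rightarrow> 'g) \<Rightarrow> 'g) \<Rightarrow> bool" where
  "simulates QU NU fU QG NG fG \<longleftrightarrow>
    (\<exists>(T::nat) a1 a2 b1 b2 C \<phi>. T > 0 \<and> b1 > 0 \<and> b2 > 0 \<and>
       finite C \<and> (0,0) \<in> C \<and>
       (\<forall>p. (\<forall>n\<in>C. p n \<in> QG) \<longrightarrow> (\<forall>r\<in>block a1 a2 b1 b2. \<phi> p r \<in> QU)) \<and>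
       inj_on (phibar a1 a2 b1 b2 C \<phi>) (conf QG) \<and>
       (\<forall>c\<in>conf QG. phibar a1 a2 b1 b2 C \<phi> (glob NG fG c) =
                       (glob NU fU ^^ T) (phibar a1 a2 b1 b2 C \<phi> c)))"

definition VN2 :: "cell set" where
  "VN2 = {(0,0), (1,0), (-1,0), (0,1), (0,-1)}"

datatype fstate = Zero | Left | Down | LeftDown

definition NF :: "cell set" where
  "NF = {(0,0), (0,1), (1,0)}"

definition fF_loc :: "fstate \<Rightarrow> fstate \<Rightarrow> fstate \<Rightarrow> fstate" where
  "fF_loc a n e =
    (if a = Zero \<and> n = Down \<and> e = Zero then Down
     else if a = Zero \<and> n = Zero \<and> e = Left then Left
     else if a = Zero \<and> e = LeftDown then Left
     else if a = Down \<and> e = Left then LeftDown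
     else a)"

definition fF :: "(cell \<Rightarrow> fstate) \<Rightarrow> fstate" where
  "fF p = fF_loc (p (0,0)) (p (0,1)) (p (1,0))"

end

(* Suppose a 1-change automaton U with neighbourhood VN2 simulates F, and run U on the codes of
   two configurations of F: a down signal descending column 0, and the same signal together with a
   left signal running west along a row, which it crosses after the down signal has passed.
   In the first orbit a cell can only change next to a changed cell, so the cells changed by some
   time t contain a path from far south, where the descending signal is visible, up to the initial
   signal.  The cells where the two orbits differ are likewise traced back in time along a path
   from far west of the column, where the left signal must eventually be visible, to its initial
   position east of the column, staying within a band of rows.  A discrete crossing lemma makes
   the two paths meet.  But the down signal changes the meeting cell before the influence of the
   left signal, spreading one cell per step, can reach it; from then on the cell is frozen in both
   orbits, so they cannot differ there.  The second
   claim follows because F, recoded over nat, is a freezing automaton with neighbourhood VN2. *)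

theory Submission
  imports Defs
begin

section \<open>Crossing paths in the grid\<close>

definition adjacent :: "cell \<Rightarrow> cell \<Rightarrow> bool" where
  "adjacent u v \<longleftrightarrow> \<bar>fst u - fst v\<bar> + \<bar>snd u - snd v\<bar> \<le> 1"

definition grid_path :: "(nat \<Rightarrow> cell) \<Rightarrow> nat \<Rightarrow> bool" where
  "grid_path p n \<longleftrightarrow> (\<forall>i<n. adjacent (p i) (p (Suc i)))"

lemma adjacent_cases:
  assumes "adjacent u v"
  obtains (same) "v = u" | (east) "v = (fst u + 1, snd u)" | (west) "u = (fst v + 1, snd v)"
    | (north) "v = (fst u, snd u + 1)" | (south) "u = (fst v, snd v + 1)"
proof -
  obtain x y x' y' where uv: "u = (x, y)" "v = (x', y')" by (cases u, cases v)
  have "\<bar>x - x'\<bar> + \<bar>y - y'\<bar> \<le> 1" using assms uv by (simp add: adjacent_def)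
  then have "x' = x \<and> y' = y \<or> x' = x + 1 \<and> y' = y \<or> x = x' + 1 \<and> y = y'
      \<or> x' = x \<and> y' = y + 1 \<or> x = x' \<and> y = y' + 1"
    by arith
  then show ?thesis using that uv by auto
qed

lemma grid_path_mono: "grid_path p n \<Longrightarrow> m \<le> n \<Longrightarrow> grid_path p m"
  by (simp add: grid_path_def)

lemma grid_path_case_nat:
  "adjacent w (p 0) \<Longrightarrow> grid_path p n \<Longrightarrow> grid_path (case_nat w p) (Suc n)"
  by (auto simp: grid_path_def less_Suc_eq_0_disj)

lemma grid_path_displacement:
  "grid_path p n \<Longrightarrow> \<bar>fst (p n) - fst (p 0)\<bar> \<le> int n \<and> \<bar>snd (p n) - snd (p 0)\<bar> \<le> int n"
proof (induction n)
  case (Suc n)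
  then have "adjacent (p n) (p (Suc n))" "grid_path p n" by (auto simp: grid_path_def)
  with Suc.IH show ?case by (auto simp: adjacent_def)
qed simp

lemma even_card_changes_iff:
  fixes s :: "nat \<Rightarrow> bool"
  shows "even (card {i. i < n \<and> s i \<noteq> s (Suc i)}) \<longleftrightarrow> s 0 = s n"
proof (induction n)
  case (Suc n)
  let ?D = "\<lambda>n. {i. i < n \<and> s i \<noteq> s (Suc i)}"
  have "?D (Suc n) = (if s n = s (Suc n) then ?D n else insert n (?D n))"
    by (auto simp: less_Suc_eq)
  with Suc.IH show ?case by auto
qed simp

text \<open>The step from a to b crosses the horizontal ray that starts halfway between w and
its northern neighbour and runs east.\<close>

definition crosses_ray :: "cell \<Rightarrow> cell \<Rightarrow> cell \<Rightarrow> bool" where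
  "crosses_ray w a b \<longleftrightarrow> fst a = fst b \<and> fst w \<le> fst a \<and>
     (snd a = snd w \<and> snd b = snd w + 1 \<or> snd a = snd w + 1 \<and> snd b = snd w)"

definition ray_crossings :: "(nat \<Rightarrow> cell) \<Rightarrow> nat \<Rightarrow> cell \<Rightarrow> nat" where
  "ray_crossings p n w = card {i. i < n \<and> crosses_ray w (p i) (p (Suc i))}"

lemma ray_crossings_shift_east:
  assumes "w \<notin> p ` {..n}"
  shows "ray_crossings p n (fst w + 1, snd w) = ray_crossings p n w"
proof -
  have "crosses_ray w (p i) (p (Suc i)) \<longleftrightarrow> crosses_ray (fst w + 1, snd w) (p i) (p (Suc i))"
    if "i < n" for i
  proof -
    have "p i \<noteq> w" "p (Suc i) \<noteq> w" using assms that by auto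
    then show ?thesis
      by (cases "p i", cases "p (Suc i)", cases w) (auto simp: crosses_ray_def)
  qed
  then show ?thesis unfolding ray_crossings_def by (metis (lifting))
qed

text \<open>The steps of p entering or leaving the half row east of the northern neighbour of w
are exactly its crossings of the two rays bounding that half row, since p avoids its west end.\<close>

lemma ray_crossings_shift_north:
  assumes p: "grid_path p n" and w': "(fst w, snd w + 1) \<notin> p ` {..n}"
    and ends: "snd (p 0) \<le> snd w" "snd w + 1 < snd (p n)"
  shows "even (ray_crossings p n w + ray_crossings p n (fst w, snd w + 1))"
proof -
  define s where "s i \<longleftrightarrow> snd (p i) = snd w + 1 \<and> fst w \<le> fst (p i)" for i
  let ?X = "\<lambda>w. {i. i < n \<and> crosses_ray w (p i) (p (Suc i))}"
  have "{i. i < n \<and> s i \<noteq> s (Suc i)} = ?X w \<union> ?X (fst w, snd w + 1)"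
  proof (intro set_eqI iffI)
    fix i assume "i \<in> {i. i < n \<and> s i \<noteq> s (Suc i)}"
    then have i: "i < n" and d: "s i \<noteq> s (Suc i)" by auto
    have "adjacent (p i) (p (Suc i))" using p i by (simp add: grid_path_def)
    moreover have "p i \<noteq> (fst w, snd w + 1)" "p (Suc i) \<noteq> (fst w, snd w + 1)"
      using w' i by (metis Suc_leI atMost_iff image_eqI less_imp_le_nat)+
    ultimately show "i \<in> ?X w \<union> ?X (fst w, snd w + 1)"
      using i d by (cases rule: adjacent_cases) (auto simp: s_def crosses_ray_def)
  next
    fix i assume "i \<in> ?X w \<union> ?X (fst w, snd w + 1)"
    then show "i \<in> {i. i < n \<and> s i \<noteq> s (Suc i)}"
      by (cases "p i", cases "p (Suc i)") (auto simp: s_def crosses_ray_def)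
  qed
  moreover have "?X w \<inter> ?X (fst w, snd w + 1) = {}"
    by (auto simp: crosses_ray_def)
  moreover have "s 0 = s n" using ends by (simp add: s_def)
  ultimately show ?thesis
    using even_card_changes_iff[of n s] by (simp add: ray_crossings_def card_Un_disjoint)
qed

lemma ray_crossings_west_odd:
  assumes p: "grid_path p n" and east: "\<forall>i\<le>n. fst w < fst (p i)"
    and ends: "snd (p 0) \<le> snd w" "snd w < snd (p n)"
  shows "odd (ray_crossings p n w)"
proof -
  define s where "s i \<longleftrightarrow> snd w < snd (p i)" for i
  have "s i \<noteq> s (Suc i) \<longleftrightarrow> crosses_ray w (p i) (p (Suc i))" if "i < n" for i
  proof -
    have "adjacent (p i) (p (Suc i))" using p that by (simp add: grid_path_def)
    moreover have "fst w < fst (p i)" "fst w < fst (p (Suc i))" using east that by auto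
    ultimately show ?thesis
      by (cases rule: adjacent_cases) (auto simp: s_def crosses_ray_def)
  qed
  then have "{i. i < n \<and> s i \<noteq> s (Suc i)} = {i. i < n \<and> crosses_ray w (p i) (p (Suc i))}"
    by blast
  moreover have "s 0 \<noteq> s n" using ends by (simp add: s_def)
  ultimately show ?thesis using even_card_changes_iff[of n s] by (simp add: ray_crossings_def)
qed

lemma ray_crossings_east_zero:
  assumes "\<forall>i\<le>n. fst (p i) < fst w"
  shows "ray_crossings p n w = 0"
proof -
  have "\<not> crosses_ray w (p i) (p (Suc i))" if "i < n" for i
  proof -
    have "fst (p i) < fst w" using assms that by simp
    then show ?thesis by (simp add: crosses_ray_def)
  qed
  then show ?thesis by (simp add: ray_crossings_def)
qed

text \<open>Discrete crossing lemma: as long as q has not met p, every cell of q has an odd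
number of crossings of p with its eastward ray; this fails at the east end of q, where the ray
misses p entirely.\<close>

theorem grid_paths_cross:
  assumes p: "grid_path p n" "snd (p 0) < yS" "yN \<le> snd (p n)"
      "\<forall>i\<le>n. xW \<le> fst (p i) \<and> fst (p i) < xE"
    and q: "grid_path q m" "fst (q 0) < xW" "xE \<le> fst (q m)"
      "\<forall>j\<le>m. yS \<le> snd (q j) \<and> snd (q j) < yN"
  shows "\<exists>i\<le>n. \<exists>j\<le>m. p i = q j"
proof (rule ccontr)
  assume "\<not> ?thesis"
  then have off_p: "q j \<notin> p ` {..n}" if "j \<le> m" for j using that by fastforce
  have "odd (ray_crossings p n (q j))" if "j \<le> m" for j
    using that
  proof (induction j)
    case 0
    show ?case using p q by (intro ray_crossings_west_odd) force+
  next
    case (Suc j)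
    then have IH: "odd (ray_crossings p n (q j))" and j: "j < m" by auto
    have rows: "snd (p 0) \<le> snd (q k)" "snd (q k) < snd (p n)" if "k \<le> m" for k
      using p(2,3) q(4) that by force+
    have "adjacent (q j) (q (Suc j))" using q(1) j by (simp add: grid_path_def)
    then show ?case
    proof (cases rule: adjacent_cases)
      case east
      then show ?thesis using IH ray_crossings_shift_east[OF off_p, of j] j by simp
    next
      case west
      then show ?thesis using IH ray_crossings_shift_east[OF off_p, of "Suc j"] j by simp
    next
      case north
      then show ?thesis
        using IH ray_crossings_shift_north[OF p(1), of "q j"] off_p[of "Suc j"] rows j
        by (metis Suc_leI less_imp_le_nat odd_add snd_conv)
    next
      case south
      then show ?thesis
        using IH ray_crossings_shift_north[OF p(1), of "q (Suc j)"] off_p[of j] rows j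
        by (metis Suc_leI less_imp_le_nat odd_add snd_conv)
    qed (use IH in simp)
  qed
  moreover have "ray_crossings p n (q m) = 0"
    using p(4) q(3) by (intro ray_crossings_east_zero) force
  ultimately show False by (metis even_zero order_refl)
qed

section \<open>Orbits of automata with von Neumann neighbourhood\<close>

lemma glob_cong:
  assumes "\<forall>n\<in>N. c (addp z n) = c' (addp z n)"
  shows "glob N f c z = glob N f c' z"
proof -
  have "pat N c z = pat N c' z" using assms by (auto simp: pat_def)
  then show ?thesis by (simp add: glob_def)
qed

lemma adjacent_addp_VN2: "n \<in> VN2 \<Longrightarrow> adjacent w (addp w n)"
  by (auto simp: VN2_def adjacent_def addp_def)

lemma addp_zero [simp]: "addp w (0, 0) = w"
  by (simp add: addp_def)

lemma funpow_value_change: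
  assumes "(g ^^ b) c z \<noteq> (g ^^ a) c z" "a \<le> b"
  shows "\<exists>t. a \<le> t \<and> t < b \<and> (g ^^ Suc t) c z \<noteq> (g ^^ t) c z"
  using assms(2,1) by (induction rule: dec_induct) (auto, metis le_SucI less_Suc_eq)

lemma k_change_1_stable:
  assumes k: "k_change 1 Q N f" and c: "c \<in> conf Q"
    and changed: "(glob N f ^^ s) c z \<noteq> c z" and "s \<le> u"
  shows "(glob N f ^^ u) c z = (glob N f ^^ s) c z"
proof (rule ccontr)
  assume later: "(glob N f ^^ u) c z \<noteq> (glob N f ^^ s) c z"
  let ?S = "{t. (glob N f ^^ Suc t) c z \<noteq> (glob N f ^^ t) c z}"
  obtain i where i: "i < s" "i \<in> ?S"
    using funpow_value_change[where g = "glob N f" and a = 0 and b = s and c = c and z = z] changed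
    by (auto simp del: funpow.simps)
  obtain j where j: "s \<le> j" "j \<in> ?S"
    using funpow_value_change[where g = "glob N f" and a = s and b = u and c = c and z = z] later \<open>s \<le> u\<close>
    by (auto simp del: funpow.simps)
  have "finite ?S \<and> card ?S \<le> 1" using k c unfolding k_change_def by blast
  then have "i = j" using i(2) j(2) card_le_Suc0_iff_eq[of ?S] by auto
  with i(1) j(1) show False by simp
qed

lemma orbit_difference_path:
  assumes "(glob VN2 f ^^ u) x w \<noteq> (glob VN2 f ^^ u) y w"
  shows "\<exists>q. q 0 = w \<and> grid_path q u \<and>
    (\<forall>j\<le>u. (glob VN2 f ^^ (u - j)) x (q j) \<noteq> (glob VN2 f ^^ (u - j)) y (q j))"
  using assms
proof (induction u arbitrary: w)
  case 0
  then show ?case by (auto simp: grid_path_def)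
next
  case (Suc u)
  have "glob VN2 f ((glob VN2 f ^^ u) x) w \<noteq> glob VN2 f ((glob VN2 f ^^ u) y) w"
    using Suc.prems by simp
  then obtain n where n: "n \<in> VN2"
    "(glob VN2 f ^^ u) x (addp w n) \<noteq> (glob VN2 f ^^ u) y (addp w n)"
    using glob_cong by blast
  then obtain q where "q 0 = addp w n" "grid_path q u"
    "\<forall>j\<le>u. (glob VN2 f ^^ (u - j)) x (q j) \<noteq> (glob VN2 f ^^ (u - j)) y (q j)"
    using Suc.IH by blast
  then show ?case
    using Suc.prems adjacent_addp_VN2[OF n(1)]
    by (intro exI[of _ "case_nat w q"]) (auto simp: grid_path_case_nat split: nat.split)
qed

lemma orbit_difference_nearby:
  assumes "(glob VN2 f ^^ (u + r)) x w \<noteq> (glob VN2 f ^^ (u + r)) y w"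
  obtains w' where "(glob VN2 f ^^ u) x w' \<noteq> (glob VN2 f ^^ u) y w'"
    "\<bar>fst w' - fst w\<bar> \<le> int r" "\<bar>snd w' - snd w\<bar> \<le> int r"
proof -
  obtain q where q: "q 0 = w" "grid_path q (u + r)"
    "\<forall>j\<le>u + r. (glob VN2 f ^^ (u + r - j)) x (q j) \<noteq> (glob VN2 f ^^ (u + r - j)) y (q j)"
    using orbit_difference_path[OF assms] by blast
  have "(glob VN2 f ^^ u) x (q r) \<noteq> (glob VN2 f ^^ u) y (q r)"
    using q(3) by (metis add_diff_cancel_right' le_add2)
  then show ?thesis
    using that q(1) grid_path_displacement[OF grid_path_mono[OF q(2)], of r] by simp
qed

lemma k_change_1_change_path:
  assumes k: "k_change 1 Q VN2 f" and x: "x \<in> conf Q"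
  shows "1 \<le> u \<Longrightarrow> (glob VN2 f ^^ u) x w \<noteq> x w \<Longrightarrow> \<exists>p n. p 0 = w \<and> grid_path p n \<and>
    (\<forall>i\<le>n. (glob VN2 f ^^ u) x (p i) \<noteq> x (p i)) \<and> glob VN2 f x (p n) \<noteq> x (p n)"
proof (induction u arbitrary: w)
  case (Suc u)
  let ?G = "glob VN2 f"
  show ?case
  proof (cases "u \<noteq> 0 \<and> (\<exists>n\<in>VN2. (?G ^^ u) x (addp w n) \<noteq> x (addp w n))")
    case True
    then obtain n where n: "n \<in> VN2" "(?G ^^ u) x (addp w n) \<noteq> x (addp w n)" by blast
    have "1 \<le> u" using True by simp
    then obtain p m where p: "p 0 = addp w n" "grid_path p m"
      "\<forall>i\<le>m. (?G ^^ u) x (p i) \<noteq> x (p i)" "?G x (p m) \<noteq> x (p m)"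
      using Suc.IH[OF _ n(2)] by blast
    have "(?G ^^ Suc u) x (p i) \<noteq> x (p i)" if "i \<le> m" for i
      using k_change_1_stable[OF k x p(3)[rule_format, OF that], of "Suc u"] p(3) that by auto
    then show ?thesis
      using p Suc.prems adjacent_addp_VN2[OF n(1)]
      by (intro exI[of _ "case_nat w p"] exI[of _ "Suc m"])
        (auto simp: grid_path_case_nat split: nat.split)
  next
    case False
    then have "?G ((?G ^^ u) x) w = ?G x w"
      by (cases "u = 0") (auto intro: glob_cong)
    then show ?thesis
      using Suc.prems by (intro exI[of _ "\<lambda>_. w"] exI[of _ 0]) (auto simp: grid_path_def)
  qed
qed simp

section \<open>Block encodings\<close>

locale block_encoding =
  fixes a1 a2 b1 b2 :: int and C :: "cell set" and \<phi> :: "(cell \<Rightarrow> 'g) \<Rightarrow> cell \<Rightarrow> 'q"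
  assumes b1_pos: "0 < b1" and b2_pos: "0 < b2" and finite_C: "finite C"
begin

abbreviation Phi :: "(cell \<Rightarrow> 'g) \<Rightarrow> cell \<Rightarrow> 'q" where
  "Phi \<equiv> phibar a1 a2 b1 b2 C \<phi>"

definition block_index :: "cell \<Rightarrow> cell" where
  "block_index w = ((fst w - a1) div b1, (snd w - a2) div b2)"

definition radius :: int where
  "radius = Max (insert 0 ((\<lambda>n. max \<bar>fst n\<bar> \<bar>snd n\<bar>) ` C))"

lemma radius_nonneg: "0 \<le> radius"
  unfolding radius_def by (rule Max_ge) (use finite_C in auto)

lemma abs_le_radius: "n \<in> C \<Longrightarrow> \<bar>fst n\<bar> \<le> radius \<and> \<bar>snd n\<bar> \<le> radius"
  using Max_ge[of "insert 0 ((\<lambda>n. max \<bar>fst n\<bar> \<bar>snd n\<bar>) ` C)" "max \<bar>fst n\<bar> \<bar>snd n\<bar>"] finite_C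
  unfolding radius_def by auto

lemma block_index_bounds:
  "a1 + b1 * fst (block_index w) \<le> fst w \<and> fst w < a1 + b1 * (fst (block_index w) + 1)"
  "a2 + b2 * snd (block_index w) \<le> snd w \<and> snd w < a2 + b2 * (snd (block_index w) + 1)"
proof -
  have "a + b * ((v - a) div b) \<le> v \<and> v < a + b * ((v - a) div b + 1)" if "0 < b" for a b v :: int
  proof -
    have "b * ((v - a) div b) + (v - a) mod b = v - a" by (rule mult_div_mod_eq)
    moreover have "0 \<le> (v - a) mod b" "(v - a) mod b < b" using that by simp_all
    ultimately show ?thesis unfolding distrib_left by linarith
  qed
  from this[OF b1_pos] this[OF b2_pos] show
    "a1 + b1 * fst (block_index w) \<le> fst w \<and> fst w < a1 + b1 * (fst (block_index w) + 1)"
    "a2 + b2 * snd (block_index w) \<le> snd w \<and> snd w < a2 + b2 * (snd (block_index w) + 1)"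
    by (auto simp: block_index_def)
qed

lemma fst_ge_of_block_index: "lo \<le> fst (block_index w) \<Longrightarrow> a1 + b1 * lo \<le> fst w"
  using block_index_bounds(1)[of w] mult_left_mono[of lo "fst (block_index w)" b1] b1_pos
  by linarith

lemma fst_less_of_block_index: "fst (block_index w) \<le> hi \<Longrightarrow> fst w < a1 + b1 * (hi + 1)"
  using block_index_bounds(1)[of w] mult_left_mono[of "fst (block_index w) + 1" "hi + 1" b1] b1_pos
  by linarith

lemma snd_ge_of_block_index: "lo \<le> snd (block_index w) \<Longrightarrow> a2 + b2 * lo \<le> snd w"
  using block_index_bounds(2)[of w] mult_left_mono[of lo "snd (block_index w)" b2] b2_pos
  by linarith

lemma snd_less_of_block_index: "snd (block_index w) \<le> hi \<Longrightarrow> snd w < a2 + b2 * (hi + 1)"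
  using block_index_bounds(2)[of w] mult_left_mono[of "snd (block_index w) + 1" "hi + 1" b2] b2_pos
  by linarith

lemma phibar_apply:
  "Phi c w = \<phi> (pat C c (block_index w))
     (fst w - b1 * fst (block_index w), snd w - b2 * snd (block_index w))"
  by (simp add: phibar_def block_index_def Let_def)

lemma phibar_in_conf:
  assumes "\<forall>p. (\<forall>n\<in>C. p n \<in> QG) \<longrightarrow> (\<forall>r\<in>block a1 a2 b1 b2. \<phi> p r \<in> QU)" "c \<in> conf QG"
  shows "Phi c \<in> conf QU"
proof -
  have "Phi c w \<in> QU" for w
  proof -
    have "(fst w - b1 * fst (block_index w), snd w - b2 * snd (block_index w)) \<in> block a1 a2 b1 b2"
      using block_index_bounds[of w] by (auto simp: block_def algebra_simps)
    moreover have "\<forall>n\<in>C. pat C c (block_index w) n \<in> QG"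
      using assms(2) by (simp add: pat_def conf_def del: split_paired_All)
    ultimately show ?thesis using assms(1) by (simp add: phibar_apply)
  qed
  then show ?thesis by (simp add: conf_def)
qed

lemma phibar_differs_near:
  assumes "Phi c w \<noteq> Phi c' w"
  obtains s where "c s \<noteq> c' s"
    "\<bar>fst (block_index w) - fst s\<bar> \<le> radius" "\<bar>snd (block_index w) - snd s\<bar> \<le> radius"
proof -
  have "\<exists>n\<in>C. c (addp (block_index w) n) \<noteq> c' (addp (block_index w) n)"
  proof (rule ccontr)
    assume "\<not> ?thesis"
    then have "pat C c (block_index w) = pat C c' (block_index w)" by (auto simp: pat_def fun_eq_iff)
    with assms show False by (simp add: phibar_apply)
  qed
  then obtain n where "n \<in> C" "c (addp (block_index w) n) \<noteq> c' (addp (block_index w) n)"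
    by blast
  with abs_le_radius[of n] show ?thesis
    using that[of "addp (block_index w) n"] by (simp add: addp_def)
qed

lemma phibar_update_differs:
  assumes "inj_on Phi (conf UNIV)" "v \<noteq> c s"
  obtains w where "Phi (c(s := v)) w \<noteq> Phi c w"
    "\<bar>fst (block_index w) - fst s\<bar> \<le> radius" "\<bar>snd (block_index w) - snd s\<bar> \<le> radius"
proof -
  have "c(s := v) \<noteq> c" using assms(2) by (metis fun_upd_same)
  then have "Phi (c(s := v)) \<noteq> Phi c"
    using assms(1) by (auto simp: conf_def inj_on_def)
  then obtain w where w: "Phi (c(s := v)) w \<noteq> Phi c w" by (metis ext)
  then obtain s' where "(c(s := v)) s' \<noteq> c s'"
    "\<bar>fst (block_index w) - fst s'\<bar> \<le> radius" "\<bar>snd (block_index w) - snd s'\<bar> \<le> radius"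
    by (rule phibar_differs_near)
  moreover from this(1) have "s' = s" by (cases "s' = s") auto
  ultimately show ?thesis using that w by blast
qed

end

section \<open>Signals of F\<close>

abbreviation F_step :: "(cell \<Rightarrow> fstate) \<Rightarrow> cell \<Rightarrow> fstate" where
  "F_step \<equiv> glob NF fF"

lemma F_step_apply: "F_step c z = fF_loc (c z) (c (fst z, snd z + 1)) (c (fst z + 1, snd z))"
  by (simp add: glob_def fF_def pat_def NF_def addp_def)

lemma F_step_Zero: "F_step (\<lambda>_. Zero) = (\<lambda>_. Zero)"
  by (simp add: fun_eq_iff F_step_apply fF_loc_def)

definition down_signal :: "nat \<Rightarrow> cell \<Rightarrow> fstate" where
  "down_signal k z = (if fst z = 0 \<and> - int k < snd z then Down else Zero)"

text \<open>The down signal together with a left signal in row -M, initially filling the columns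
east of L; for M < L it reaches column 0 only after the down signal has passed row -M.\<close>

definition crossing_signals :: "int \<Rightarrow> int \<Rightarrow> nat \<Rightarrow> cell \<Rightarrow> fstate" where
  "crossing_signals M L k z =
    (if fst z = 0 then
       (if - int k < snd z then (if snd z = - M \<and> L < int k then LeftDown else Down) else Zero)
     else if snd z = - M \<and> L - int k < fst z then Left else Zero)"

lemma F_step_down_signal: "F_step (down_signal k) = down_signal (Suc k)"
  by (auto simp: fun_eq_iff F_step_apply down_signal_def fF_loc_def)

lemma F_step_crossing_signals:
  assumes "M < L"
  shows "F_step (crossing_signals M L k) = crossing_signals M L (Suc k)"
proof
  fix z :: cell
  show "F_step (crossing_signals M L k) z = crossing_signals M L (Suc k) z"
    using assms by (cases "fst z = 0") (auto simp: F_step_apply crossing_signals_def fF_loc_def)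
qed

lemma funpow_F_step_down_signal: "(F_step ^^ k) (down_signal 0) = down_signal k"
  by (induction k) (simp_all add: F_step_down_signal)

lemma funpow_F_step_crossing_signals:
  "M < L \<Longrightarrow> (F_step ^^ k) (crossing_signals M L 0) = crossing_signals M L k"
  by (induction k) (simp_all add: F_step_crossing_signals)

lemma down_signal_Suc: "down_signal (Suc k) = (down_signal k)((0, - int k) := Down)"
  by (auto simp: fun_eq_iff down_signal_def)

lemma crossing_signals_Suc:
  assumes "M < L" "L < int k"
  shows "crossing_signals M L (Suc k) =
    ((crossing_signals M L k)((L - int k, - M) := Left))((0, - int k) := Down)"
  using assms by (auto simp: fun_eq_iff crossing_signals_def)

section \<open>A 1-change automaton cannot simulate F\<close>

locale F_simulation = block_encoding a1 a2 b1 b2 C \<phi>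
  for a1 a2 b1 b2 :: int and C :: "cell set" and \<phi> :: "(cell \<Rightarrow> fstate) \<Rightarrow> cell \<Rightarrow> 'q" +
  fixes QU :: "'q set" and fU :: "(cell \<Rightarrow> 'q) \<Rightarrow> 'q" and T :: nat
  assumes T_pos: "0 < T"
    and \<phi>_states: "\<forall>p. (\<forall>n\<in>C. p n \<in> (UNIV :: fstate set)) \<longrightarrow> (\<forall>r\<in>block a1 a2 b1 b2. \<phi> p r \<in> QU)"
    and inj_phibar: "inj_on (phibar a1 a2 b1 b2 C \<phi>) (conf UNIV)"
    and phibar_F_step: "\<forall>c\<in>conf UNIV.
      phibar a1 a2 b1 b2 C \<phi> (F_step c) = (glob VN2 fU ^^ T) (phibar a1 a2 b1 b2 C \<phi> c)"
    and one_change: "k_change 1 QU VN2 fU"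
begin

abbreviation G :: "(cell \<Rightarrow> 'q) \<Rightarrow> cell \<Rightarrow> 'q" where
  "G \<equiv> glob VN2 fU"

lemma Phi_in_conf: "Phi c \<in> conf QU"
  using phibar_in_conf[OF \<phi>_states] by (simp add: conf_def)

lemma Phi_funpow_F_step: "Phi ((F_step ^^ k) c) = (G ^^ (k * T)) (Phi c)"
proof (induction k)
  case (Suc k)
  have "Phi ((F_step ^^ Suc k) c) = (G ^^ T) ((G ^^ (k * T)) (Phi c))"
    using phibar_F_step Suc.IH by (simp add: conf_def)
  then show ?case by (simp add: funpow_add add.commute)
qed simp

text \<open>The zero configuration is fixed by F, so its code is fixed by the T-th power of G;
a cell changed by the first step would have to change back.\<close>

lemma G_Phi_Zero: "G (Phi (\<lambda>_. Zero)) = Phi (\<lambda>_. Zero)"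
proof (rule ext, rule ccontr)
  fix w
  let ?x = "Phi (\<lambda>_. Zero)"
  assume "G ?x w \<noteq> ?x w"
  moreover have "(G ^^ T) ?x = ?x"
    using Phi_funpow_F_step[of 1 "\<lambda>_. Zero"] by (simp add: F_step_Zero)
  ultimately show False
    using k_change_1_stable[OF one_change Phi_in_conf[of "\<lambda>_. Zero"], of 1 w T] T_pos by simp
qed

lemma funpow_G_down_signal: "(G ^^ (k * T)) (Phi (down_signal 0)) = Phi (down_signal k)"
  using Phi_funpow_F_step[of k "down_signal 0"] by (simp add: funpow_F_step_down_signal)

definition down_trace :: "nat \<Rightarrow> cell set" where
  "down_trace u = {w. (G ^^ u) (Phi (down_signal 0)) w \<noteq> Phi (down_signal 0) w}"

lemma down_trace_mono: "u \<le> u' \<Longrightarrow> w \<in> down_trace u \<Longrightarrow> w \<in> down_trace u'"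
  using k_change_1_stable[OF one_change Phi_in_conf[of "down_signal 0"], of u w u']
  by (simp add: down_trace_def)

lemma down_trace_column: "w \<in> down_trace u \<Longrightarrow> \<bar>fst (block_index w)\<bar> \<le> radius"
proof -
  assume "w \<in> down_trace u"
  then have "w \<in> down_trace (u * T)" using down_trace_mono[of u "u * T"] T_pos by simp
  then have "Phi (down_signal u) w \<noteq> Phi (down_signal 0) w"
    by (simp add: down_trace_def funpow_G_down_signal)
  then obtain s where "down_signal u s \<noteq> down_signal 0 s"
    "\<bar>fst (block_index w) - fst s\<bar> \<le> radius" "\<bar>snd (block_index w) - snd s\<bar> \<le> radius"
    by (rule phibar_differs_near)
  then show ?thesis by (auto simp: down_signal_def split: if_splits)
qed

lemma down_trace_strip:
  assumes "w \<in> down_trace u"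
  shows "a1 + b1 * (- radius) \<le> fst w \<and> fst w < a1 + b1 * (radius + 1)"
proof -
  have "- radius \<le> fst (block_index w)" "fst (block_index w) \<le> radius"
    using down_trace_column[OF assms] by (simp_all add: abs_le_iff)
  then show ?thesis by (blast intro: fst_ge_of_block_index fst_less_of_block_index)
qed

text \<open>A cell changing in the first step sees, in its neighbourhood, a difference between the
codes of the down signal and of the fixed zero configuration.\<close>

lemma down_trace_1_north:
  assumes "w \<in> down_trace 1"
  shows "a2 + b2 * (1 - radius) - 1 \<le> snd w"
proof -
  let ?x = "Phi (down_signal 0)"
  let ?z = "Phi (\<lambda>_. Zero)"
  have "\<exists>n\<in>VN2. ?x (addp w n) \<noteq> ?z (addp w n)"
  proof (rule ccontr)
    assume agree: "\<not> ?thesis"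
    then have "G ?x w = G ?z w" by (intro glob_cong) blast
    also have "\<dots> = ?z w" using G_Phi_Zero by simp
    also have "\<dots> = ?x w" using agree by (metis VN2_def addp_zero insertI1)
    finally show False using assms by (simp add: down_trace_def)
  qed
  then obtain n where n: "n \<in> VN2" "?x (addp w n) \<noteq> ?z (addp w n)" by blast
  obtain s where "down_signal 0 s \<noteq> Zero"
    "\<bar>fst (block_index (addp w n)) - fst s\<bar> \<le> radius"
    "\<bar>snd (block_index (addp w n)) - snd s\<bar> \<le> radius"
    using n(2) by (rule phibar_differs_near)
  then have "1 - radius \<le> snd (block_index (addp w n))"
    by (auto simp: down_signal_def split: if_splits)
  then have "a2 + b2 * (1 - radius) \<le> snd (addp w n)" by (rule snd_ge_of_block_index)
  moreover have "snd (addp w n) \<le> snd w + 1" using n(1) by (auto simp: VN2_def addp_def)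
  ultimately show ?thesis by simp
qed

lemma down_trace_south: "\<exists>w \<in> down_trace (Suc k * T). snd (block_index w) \<le> radius - int k"
proof -
  have "Down \<noteq> down_signal k (0, - int k)" by (simp add: down_signal_def)
  then obtain w where w: "Phi ((down_signal k)((0, - int k) := Down)) w \<noteq> Phi (down_signal k) w"
    "\<bar>fst (block_index w) - fst (0::int, - int k)\<bar> \<le> radius"
    "\<bar>snd (block_index w) - snd (0::int, - int k)\<bar> \<le> radius"
    by (rule phibar_update_differs[OF inj_phibar])
  then have "(G ^^ (Suc k * T)) (Phi (down_signal 0)) w \<noteq> (G ^^ (k * T)) (Phi (down_signal 0)) w"
    by (simp only: funpow_G_down_signal down_signal_Suc not_False_eq_True)
  then have "w \<in> down_trace (Suc k * T)"
    using down_trace_mono[of "k * T" "Suc k * T" w] by (auto simp: down_trace_def)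
  moreover have "snd (block_index w) \<le> radius - int k" using w(3) by (simp add: abs_le_iff)
  ultimately show ?thesis by blast
qed

lemma down_trace_path:
  "\<exists>p n. grid_path p n \<and> snd (p 0) < a2 + b2 * (radius - int k + 1) \<and>
    a2 + b2 * (1 - radius) - 1 \<le> snd (p n) \<and> (\<forall>i\<le>n. p i \<in> down_trace (Suc k * T))"
proof -
  obtain w where w: "w \<in> down_trace (Suc k * T)" "snd (block_index w) \<le> radius - int k"
    using down_trace_south by blast
  then obtain p n where "p 0 = w" "grid_path p n" "\<forall>i\<le>n. p i \<in> down_trace (Suc k * T)"
    "p n \<in> down_trace 1"
    using k_change_1_change_path[OF one_change Phi_in_conf[of "down_signal 0"], of "Suc k * T" w] T_pos
    by (auto simp: down_trace_def)
  with snd_less_of_block_index[OF w(2)] show ?thesis using down_trace_1_north by blast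
qed

definition left_trace :: "int \<Rightarrow> int \<Rightarrow> nat \<Rightarrow> cell set" where
  "left_trace M L u = {w. (G ^^ u) (Phi (crossing_signals M L 0)) w \<noteq> (G ^^ u) (Phi (down_signal 0)) w}"

context
  fixes M L :: int
  assumes M_less_L: "M < L"
begin

lemma funpow_G_crossing_signals:
  "(G ^^ (k * T)) (Phi (crossing_signals M L 0)) = Phi (crossing_signals M L k)"
  using Phi_funpow_F_step[of k "crossing_signals M L 0"]
  by (simp add: funpow_F_step_crossing_signals[OF M_less_L])

lemma left_trace_start: "w \<in> left_trace M L 0 \<Longrightarrow> L + 1 - radius \<le> fst (block_index w)"
proof -
  assume "w \<in> left_trace M L 0"
  then have "Phi (crossing_signals M L 0) w \<noteq> Phi (down_signal 0) w"
    by (simp add: left_trace_def)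
  then obtain s where "crossing_signals M L 0 s \<noteq> down_signal 0 s"
    "\<bar>fst (block_index w) - fst s\<bar> \<le> radius" "\<bar>snd (block_index w) - snd s\<bar> \<le> radius"
    by (rule phibar_differs_near)
  then show ?thesis
    using M_less_L by (auto simp: crossing_signals_def down_signal_def abs_le_iff split: if_splits)
qed

text \<open>At times k T both orbits are codes of configurations of F that differ only in row -M;
in the remaining fewer than T steps the difference moves by fewer than T cells.\<close>

lemma left_trace_row:
  assumes "w \<in> left_trace M L u"
  shows "a2 + b2 * (- M - radius - int T) \<le> snd w \<and> snd w < a2 + b2 * (radius - M + 1 + int T)"
proof -
  define k where "k = u div T"
  define r where "r = u mod T"
  have "u = k * T + r" "r < T" using T_pos by (simp_all add: k_def r_def)
  with assms have "(G ^^ (k * T + r)) (Phi (crossing_signals M L 0)) w \<noteq>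
      (G ^^ (k * T + r)) (Phi (down_signal 0)) w"
    by (simp add: left_trace_def)
  then obtain w' where w': "(G ^^ (k * T)) (Phi (crossing_signals M L 0)) w' \<noteq>
      (G ^^ (k * T)) (Phi (down_signal 0)) w'"
    "\<bar>fst w' - fst w\<bar> \<le> int r" "\<bar>snd w' - snd w\<bar> \<le> int r"
    by (rule orbit_difference_nearby)
  from w'(1) have "Phi (crossing_signals M L k) w' \<noteq> Phi (down_signal k) w'"
    by (simp add: funpow_G_crossing_signals funpow_G_down_signal)
  then obtain s where "crossing_signals M L k s \<noteq> down_signal k s"
    "\<bar>fst (block_index w') - fst s\<bar> \<le> radius" "\<bar>snd (block_index w') - snd s\<bar> \<le> radius"
    by (rule phibar_differs_near)
  then have "- M - radius \<le> snd (block_index w')" "snd (block_index w') \<le> radius - M"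
    by (auto simp: crossing_signals_def down_signal_def abs_le_iff split: if_splits)
  then have "a2 + b2 * (- M - radius) \<le> snd w'" "snd w' < a2 + b2 * (radius - M + 1)"
    by (blast intro: snd_ge_of_block_index snd_less_of_block_index)+
  moreover have "b2 * (- M - radius - int T) = b2 * (- M - radius) - b2 * int T"
    "b2 * (radius - M + 1 + int T) = b2 * (radius - M + 1) + b2 * int T"
    by (simp_all add: algebra_simps)
  moreover have "int T \<le> b2 * int T" using b2_pos by (simp add: mult_le_cancel_right1)
  ultimately show ?thesis using w'(3) \<open>r < T\<close> unfolding abs_le_iff by linarith
qed

text \<open>By injectivity, the step of the left signal at (L - k, -M) is visible near that cell,
which lies west of everything the down signal ever changes.\<close>

lemma left_trace_far_west:
  assumes far: "L + 2 * radius < int k"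
  shows "\<exists>u w. w \<in> left_trace M L u \<and> fst (block_index w) \<le> L - int k + radius"
proof -
  let ?c = "(crossing_signals M L k)((L - int k, - M) := Left)"
  have k: "L < int k" using far radius_nonneg by simp
  then have "Left \<noteq> crossing_signals M L k (L - int k, - M)"
    by (simp add: crossing_signals_def)
  then obtain w where w: "Phi ?c w \<noteq> Phi (crossing_signals M L k) w"
    "\<bar>fst (block_index w) - fst (L - int k, - M)\<bar> \<le> radius"
    "\<bar>snd (block_index w) - snd (L - int k, - M)\<bar> \<le> radius"
    by (rule phibar_update_differs[OF inj_phibar])
  have west: "fst (block_index w) \<le> L - int k + radius" using w(2) by (simp add: abs_le_iff)
  then have off_column: "\<not> \<bar>fst (block_index w)\<bar> \<le> radius" using far by (simp add: abs_le_iff)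
  have "Phi (?c((0, - int k) := Down)) w = Phi ?c w"
  proof (rule ccontr)
    assume "Phi (?c((0, - int k) := Down)) w \<noteq> Phi ?c w"
    then obtain s where "(?c((0, - int k) := Down)) s \<noteq> ?c s"
      "\<bar>fst (block_index w) - fst s\<bar> \<le> radius" "\<bar>snd (block_index w) - snd s\<bar> \<le> radius"
      by (rule phibar_differs_near)
    with off_column show False by (cases "s = (0, - int k)") auto
  qed
  with w(1) have "Phi (crossing_signals M L (Suc k)) w \<noteq> Phi (crossing_signals M L k) w"
    using crossing_signals_Suc[OF M_less_L k] by simp
  then have "(G ^^ (Suc k * T)) (Phi (crossing_signals M L 0)) w \<noteq>
      (G ^^ (k * T)) (Phi (crossing_signals M L 0)) w"
    by (simp only: funpow_G_crossing_signals not_False_eq_True)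
  moreover have "(G ^^ v) (Phi (down_signal 0)) w = Phi (down_signal 0) w" for v
    using down_trace_column[of w v] off_column by (auto simp: down_trace_def)
  ultimately have "w \<in> left_trace M L (Suc k * T) \<or> w \<in> left_trace M L (k * T)"
    by (auto simp: left_trace_def)
  with west show ?thesis by blast
qed

lemma left_trace_path:
  "\<exists>q u. grid_path q u \<and> fst (q 0) < a1 + b1 * (- radius) \<and>
    a1 + b1 * (L + 1 - radius) \<le> fst (q u) \<and> (\<forall>j\<le>u. q j \<in> left_trace M L (u - j))"
proof -
  define k where "k = nat (L + 2 * radius + 1)"
  have "L + 2 * radius < int k" by (simp add: k_def)
  then obtain u w where w: "w \<in> left_trace M L u" "fst (block_index w) \<le> L - int k + radius"
    using left_trace_far_west by blast
  have "L - int k + radius \<le> - radius - 1" using radius_nonneg by (simp add: k_def)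
  with w(2) have west: "fst w < a1 + b1 * (- radius)"
    using fst_less_of_block_index[of w "- radius - 1"] by simp
  from w(1) obtain q where q: "q 0 = w" "grid_path q u" "\<forall>j\<le>u. q j \<in> left_trace M L (u - j)"
    using orbit_difference_path[where f = fU and x = "Phi (crossing_signals M L 0)"
        and y = "Phi (down_signal 0)"]
    by (simp add: left_trace_def) blast
  moreover have "a1 + b1 * (L + 1 - radius) \<le> fst (q u)"
    using q(3)[rule_format, of u] by (intro fst_ge_of_block_index left_trace_start) simp
  ultimately show ?thesis using west by blast
qed

text \<open>Until time t the left trace, spreading one cell per step from the east, cannot reach
the strip of the down signal; from time t on, w has changed in both orbits, which agree there
at time t, so w is frozen in both.\<close>

lemma left_trace_disjoint_down_trace:
  assumes t: "int t \<le> b1 * (L - 2 * radius)" and w: "w \<in> down_trace t"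
  shows "w \<notin> left_trace M L u"
proof -
  let ?x = "Phi (crossing_signals M L 0)"
  let ?y = "Phi (down_signal 0)"
  have east: "fst w < a1 + b1 * (radius + 1)" using down_trace_strip[OF w] by simp
  have early: "w \<notin> left_trace M L v" if "v \<le> t" for v
  proof
    assume "w \<in> left_trace M L v"
    then have "(G ^^ (0 + v)) ?x w \<noteq> (G ^^ (0 + v)) ?y w" by (simp add: left_trace_def)
    then obtain w' where w': "(G ^^ 0) ?x w' \<noteq> (G ^^ 0) ?y w'" "\<bar>fst w' - fst w\<bar> \<le> int v"
      "\<bar>snd w' - snd w\<bar> \<le> int v"
      by (rule orbit_difference_nearby)
    then have "a1 + b1 * (L + 1 - radius) \<le> fst w'"
      by (intro fst_ge_of_block_index left_trace_start) (simp add: left_trace_def)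
    moreover have "b1 * (L + 1 - radius) = b1 * (radius + 1) + b1 * (L - 2 * radius)"
      by (simp add: algebra_simps)
    ultimately show False using east t that w'(2) by (simp add: abs_le_iff)
  qed
  show ?thesis
  proof (cases "u \<le> t")
    case False
    have "(G ^^ t) ?y w \<noteq> ?y w" using w by (simp add: down_trace_def)
    moreover have "(G ^^ t) ?x w = (G ^^ t) ?y w" "?x w = ?y w"
      using early[of t] early[of 0] by (auto simp: left_trace_def)
    ultimately have "(G ^^ u) ?x w = (G ^^ t) ?x w" "(G ^^ u) ?y w = (G ^^ t) ?y w"
      using k_change_1_stable[OF one_change Phi_in_conf[of "crossing_signals M L 0"], of t w u]
        k_change_1_stable[OF one_change Phi_in_conf[of "down_signal 0"], of t w u] False
      by auto
    with \<open>(G ^^ t) ?x w = (G ^^ t) ?y w\<close> show ?thesis by (simp add: left_trace_def)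
  qed (use early in blast)
qed

end

end

context F_simulation
begin

text \<open>The parameters are chosen so that the two paths cross, while the down signal has
changed the crossing cell before the left signal can reach it.\<close>

theorem contradiction: False
proof -
  define M where "M = 2 * radius + int T + 1"
  define k where "k = nat (M + 2 * radius + int T + 1)"
  define t where "t = Suc k * T"
  define L where "L = 2 * radius + int t + M + 1"
  have R: "0 \<le> radius" by (rule radius_nonneg)
  have rows: "M < L" using R by (simp add: M_def L_def)
  obtain p n where p: "grid_path p n" "snd (p 0) < a2 + b2 * (radius - int k + 1)"
    "a2 + b2 * (1 - radius) - 1 \<le> snd (p n)" "\<forall>i\<le>n. p i \<in> down_trace t"
    using down_trace_path[of k] unfolding t_def by blast
  obtain q u where q: "grid_path q u" "fst (q 0) < a1 + b1 * (- radius)"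
    "a1 + b1 * (L + 1 - radius) \<le> fst (q u)" "\<forall>j\<le>u. q j \<in> left_trace M L (u - j)"
    using left_trace_path[OF rows] by blast
  have "radius - int k + 1 = - M - radius - int T" using R by (simp add: k_def M_def)
  with p(2) have p_south: "snd (p 0) < a2 + b2 * (- M - radius - int T)" by simp
  have p_strip: "\<forall>i\<le>n. a1 + b1 * (- radius) \<le> fst (p i) \<and> fst (p i) < a1 + b1 * (radius + 1)"
    using p(4) down_trace_strip by blast
  have "b1 * (radius + 1) \<le> b1 * (L + 1 - radius)"
    using b1_pos by (intro mult_left_mono) (simp_all add: L_def M_def R)
  with q(3) have q_east: "a1 + b1 * (radius + 1) \<le> fst (q u)" by simp
  have q_rows: "\<forall>j\<le>u. a2 + b2 * (- M - radius - int T) \<le> snd (q j) \<and>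
      snd (q j) < a2 + b2 * (1 - radius) - 1"
  proof (intro allI impI)
    fix j assume "j \<le> u"
    then have "q j \<in> left_trace M L (u - j)" using q(4) by simp
    moreover have "b2 * (radius - M + 1 + int T) = b2 * (1 - radius) - b2"
      by (simp add: M_def algebra_simps)
    ultimately show "a2 + b2 * (- M - radius - int T) \<le> snd (q j) \<and>
        snd (q j) < a2 + b2 * (1 - radius) - 1"
      using left_trace_row[OF rows] b2_pos by fastforce
  qed
  obtain i j where ij: "i \<le> n" "j \<le> u" "p i = q j"
    using grid_paths_cross[OF p(1) p_south p(3) p_strip q(1) q(2) q_east q_rows] by blast
  have "int t \<le> L - 2 * radius" by (simp add: L_def M_def R)
  also have "\<dots> \<le> b1 * (L - 2 * radius)"
    using b1_pos R by (simp add: mult_le_cancel_right1 L_def M_def)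
  finally have "p i \<notin> left_trace M L (u - j)"
    using p(4) ij(1) left_trace_disjoint_down_trace[OF rows] by blast
  with q(4) ij show False by auto
qed

end

lemma not_simulates_F:
  assumes "k_change 1 QU VN2 fU"
  shows "\<not> simulates QU VN2 fU (UNIV :: fstate set) NF fF"
proof
  assume "simulates QU VN2 fU (UNIV :: fstate set) NF fF"
  then obtain T a1 a2 b1 b2 C \<phi> where "F_simulation a1 a2 b1 b2 C \<phi> QU fU T"
    using assms unfolding simulates_def F_simulation_def F_simulation_axioms_def block_encoding_def
    by blast
  then show False by (rule F_simulation.contradiction)
qed

section \<open>F as a freezing automaton over nat\<close>

definition fstate_code :: "fstate \<Rightarrow> nat" where
  "fstate_code a = (case a of Zero \<Rightarrow> 0 | Left \<Rightarrow> 1 | Down \<Rightarrow> 2 | LeftDown \<Rightarrow> 3)"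

lemma inj_fstate_code: "inj fstate_code"
  by (rule injI) (auto simp: fstate_code_def split: fstate.splits)

definition fF_coded :: "(cell \<Rightarrow> nat) \<Rightarrow> nat" where
  "fF_coded p = fstate_code (fF (inv fstate_code \<circ> p))"

lemma glob_fF_coded: "glob VN2 fF_coded (fstate_code \<circ> c) = fstate_code \<circ> glob NF fF c"
  by (rule ext) (simp add: glob_def fF_coded_def fF_def pat_def VN2_def NF_def inv_f_f[OF inj_fstate_code])

lemma finite_UNIV_fstate: "finite (UNIV :: fstate set)"
proof -
  have "(UNIV :: fstate set) = {Zero, Left, Down, LeftDown}" using fstate.exhaust by auto
  then show ?thesis by (metis finite.emptyI finite.insertI)
qed

lemma is_CA_fF_coded: "is_CA (range fstate_code) VN2 fF_coded"
  using finite_UNIV_fstate by (auto simp: is_CA_def fF_coded_def VN2_def)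

definition fstate_le :: "fstate \<Rightarrow> fstate \<Rightarrow> bool" where
  "fstate_le a b \<longleftrightarrow> a = b \<or> b = Zero \<or> (a = LeftDown \<and> b = Down)"

lemma freezing_fF_coded: "freezing (range fstate_code) VN2 fF_coded"
proof -
  define R where "R = {(fstate_code a, fstate_code b) | a b. fstate_le a b}"
  have "partial_order_on (range fstate_code) R"
    using inj_fstate_code
    by (auto simp: R_def partial_order_on_def preorder_on_def refl_on_def trans_def antisym_def
        fstate_le_def inj_eq)
  moreover have "(glob VN2 fF_coded c z, c z) \<in> R" if "c \<in> conf (range fstate_code)" for c z
  proof -
    define c' where "c' = inv fstate_code \<circ> c"
    have "c = fstate_code \<circ> c'"
      using that by (auto simp: c'_def conf_def fun_eq_iff f_inv_into_f)
    then have "glob VN2 fF_coded c z = fstate_code (glob NF fF c' z)"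
      by (simp add: glob_fF_coded)
    moreover have "fstate_le (glob NF fF c' z) (c' z)"
      by (simp add: F_step_apply fF_loc_def fstate_le_def)
    ultimately show ?thesis using \<open>c = fstate_code \<circ> c'\<close> by (auto simp: R_def)
  qed
  ultimately show ?thesis by (auto simp: freezing_def)
qed

lemma simulates_F_if_simulates_fF_coded:
  assumes "simulates QU VN2 fU (range fstate_code) VN2 fF_coded"
  shows "simulates QU VN2 fU (UNIV :: fstate set) NF fF"
proof -
  obtain T a1 a2 b1 b2 C \<phi> where h: "T > 0" "b1 > 0" "b2 > 0" "finite C" "(0,0) \<in> C"
    "\<forall>p. (\<forall>n\<in>C. p n \<in> range fstate_code) \<longrightarrow> (\<forall>r\<in>block a1 a2 b1 b2. \<phi> p r \<in> QU)"
    "inj_on (phibar a1 a2 b1 b2 C \<phi>) (conf (range fstate_code))"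
    "\<forall>c\<in>conf (range fstate_code). phibar a1 a2 b1 b2 C \<phi> (glob VN2 fF_coded c) =
       (glob VN2 fU ^^ T) (phibar a1 a2 b1 b2 C \<phi> c)"
    using assms unfolding simulates_def by blast
  \<comment> \<open>Patterns are undefined outside C, so the code must only be applied on C.\<close>
  define \<phi>' where "\<phi>' p = \<phi> (\<lambda>n. if n \<in> C then fstate_code (p n) else undefined)" for p
  have phibar_coded: "phibar a1 a2 b1 b2 C \<phi>' c = phibar a1 a2 b1 b2 C \<phi> (fstate_code \<circ> c)" for c
  proof -
    have "(\<lambda>n. if n \<in> C then fstate_code (pat C c z n) else undefined) = pat C (fstate_code \<circ> c) z"
      for z by (auto simp: pat_def)
    then show ?thesis by (simp add: phibar_def \<phi>'_def Let_def)
  qed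
  have coded_conf: "fstate_code \<circ> c \<in> conf (range fstate_code)" for c
    by (auto simp: conf_def)
  have "inj_on (phibar a1 a2 b1 b2 C \<phi>') (conf UNIV)"
  proof (rule inj_onI)
    fix c c' :: "cell \<Rightarrow> fstate"
    assume "phibar a1 a2 b1 b2 C \<phi>' c = phibar a1 a2 b1 b2 C \<phi>' c'"
    then have "fstate_code \<circ> c = fstate_code \<circ> c'"
      using h(7) coded_conf unfolding phibar_coded inj_on_def by blast
    then show "c = c'" using inj_fstate_code by (simp add: fun_eq_iff inj_eq)
  qed
  moreover have "\<forall>p. (\<forall>n\<in>C. p n \<in> (UNIV :: fstate set)) \<longrightarrow> (\<forall>r\<in>block a1 a2 b1 b2. \<phi>' p r \<in> QU)"
    using h(6) by (simp add: \<phi>'_def)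
  moreover have "\<forall>c\<in>conf UNIV. phibar a1 a2 b1 b2 C \<phi>' (glob NF fF c) =
      (glob VN2 fU ^^ T) (phibar a1 a2 b1 b2 C \<phi>' c)"
    using h(8) coded_conf by (simp add: phibar_coded flip: glob_fF_coded)
  ultimately show ?thesis using h(1-5) unfolding simulates_def by blast
qed

theorem theorem10:
  shows "(\<forall>(QU::'q set) fU. is_CA QU VN2 fU \<and> freezing QU VN2 fU \<and> k_change 1 QU VN2 fU
            \<longrightarrow> \<not> simulates QU VN2 fU (UNIV::fstate set) NF fF)
       \<and> \<not> (\<exists>(QU::'q set) fU. is_CA QU VN2 fU \<and> freezing QU VN2 fU \<and> k_change 1 QU VN2 fU \<and>
            (\<forall>(QG::nat set) fG. is_CA QG VN2 fG \<and> freezing QG VN2 fG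
               \<longrightarrow> simulates QU VN2 fU QG VN2 fG))"
  using not_simulates_F simulates_F_if_simulates_fF_coded is_CA_fF_coded freezing_fF_coded
  by blast

end
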